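(* Let $n$ be a positive integer, $q=2^n$, and let $k$ be an integer with $1\le k\le n-1$ and $k\notin\{n/3,2n/3\}$. Put $d=\gcd(n,k)$, $q_0=2^d$, $s=n/d$, and assume $s$ is odd. For $\alpha,\beta\in\mathbb{F}_q$ with $(\alpha,\beta)\neq(0,0)$, consider the $\mathbb{F}_{q_0}$-valued quadratic form $$f_{\alpha,\beta}(x)=\mathrm{Tr}_d^n\!\left(\alpha x^{2^{2k}+1}+\beta x^{2^k+1}\right)$$ on the $s$-dimensional $\mathbb{F}_{q_0}$-vector space $\mathbb{F}_q$, and let $r_{\alpha,\beta}$ be the rank over $\mathbb{F}_{q_0}$ of its associated (alternating) bilinear form $B_{\alpha,\beta}(x,y)=f_{\alpha,\beta}(x+y)-f_{\alpha,\beta}(x)-f_{\alpha,\beta}(y)$. Then $r_{\alpha,\beta}\in\{s-1,\,s-3\}$.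
   Context: $\mathrm{Tr}_d^n:\mathbb{F}_{2^n}\to\mathbb{F}_{2^d}$ denotes the relative trace map $x\mapsto \sum_{i=0}^{s-1}x^{2^{di}}$. Equivalently, after fixing an $\mathbb{F}_{q_0}$-basis of $\mathbb{F}_q$, $f_{\alpha,\beta}$ becomes $F(X)=XHX^T$ for an $s\times s$ matrix $H$ over $\mathbb{F}_{q_0}$ and $r_{\alpha,\beta}$ is the rank of $H+H^T$. *)

theory Defs
  imports Main
begin

definition rel_trace :: "nat \<Rightarrow> nat \<Rightarrow> 'a::field \<Rightarrow> 'a" where
  "rel_trace d n x = (\<Sum>i<n div d. x ^ (2 ^ (d * i)))"

definition f_ab :: "nat \<Rightarrow> nat \<Rightarrow> nat \<Rightarrow> 'a::field \<Rightarrow> 'a \<Rightarrow> 'a \<Rightarrow> 'a" where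
  "f_ab d n k \<alpha> \<beta> x =
     rel_trace d n (\<alpha> * x ^ (2 ^ (2 * k) + 1) + \<beta> * x ^ (2 ^ k + 1))"

definition assoc_bilinear :: "('a::field \<Rightarrow> 'a) \<Rightarrow> 'a \<Rightarrow> 'a \<Rightarrow> 'a" where
  "assoc_bilinear f x y = f (x + y) - f x - f y"

definition radical :: "('a \<Rightarrow> 'a \<Rightarrow> 'a::field) \<Rightarrow> 'a set" where
  "radical B = {x. \<forall>y. B x y = 0}"

text \<open>Rank over F_{q0} of a bilinear form on an s-dimensional F_{q0}-space:
  s minus the F_{q0}-dimension of its radical; the radical, an F_{q0}-subspace,
  has q0^m elements where m is its dimension.\<close>
definition form_rank :: "nat \<Rightarrow> nat \<Rightarrow> ('a \<Rightarrow> 'a \<Rightarrow> 'a::field) \<Rightarrow> nat" where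
  "form_rank q0 s B = s - (THE m. card (radical B) = q0 ^ m)"

end

theory Submission
  imports Defs
    "HOL-Computational_Algebra.Polynomial"
    "HOL-Computational_Algebra.Primes"
    "HOL-Number_Theory.Residues"
    "HOL-Algebra.Multiplicative_Group"
begin

text \<open>Since \<open>B_ab\<close> is alternating, its rank \<open>r\<close> is even, so the radical has odd dimension
  \<open>s - r\<close> over \<open>F\<^sub>q\<^sub>0\<close>. Moving each term of \<open>B_ab x y\<close> by a power of the Frobenius \<open>x \<mapsto> x ^ 2 ^ d\<close>,
  which the trace ignores, gives \<open>B_ab x y = Tr (y ^ 2 ^ (2 k) L(x))\<close> for the linearized polynomial
  \<open>L(x) = \<alpha> x + \<beta> ^ 2 ^ k x ^ 2 ^ k + \<beta> ^ 2 ^ (2 k) x ^ 2 ^ (3 k) + \<alpha> ^ 2 ^ (2 k) x ^ 2 ^ (4 k)\<close>. Hence the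
  radical lies in the kernel of \<open>L\<close>. For \<open>s \<ge> 5\<close> the exponents \<open>2 ^ (j k mod n)\<close> are distinct, so
  \<open>L \<noteq> 0\<close>, and the kernel of a nonzero linearized polynomial of \<open>2 ^ k\<close>-degree 4 has dimension at
  most 4 over the fixed field of \<open>x \<mapsto> x ^ 2 ^ k\<close>, which is \<open>F\<^sub>q\<^sub>0\<close>. So the radical has dimension 1 or 3
  (for \<open>s \<le> 3\<close> this is immediate).
  The dimension count for alternating forms is proved by splitting off hyperbolic planes.\<close>

section \<open>Finite fields of characteristic two\<close>

lemma power_card_UNIV_eq_self:
  fixes x :: "'a::{field,finite}"
  shows "x ^ card (UNIV :: 'a set) = x"
proof (cases "x = 0")
  case False
  define G :: "'a monoid" where "G = \<lparr>carrier = UNIV - {0}, monoid.mult = (*), one = 1\<rparr>"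
  have "group G"
  proof (rule groupI)
    show "\<exists>y\<in>carrier G. y \<otimes>\<^bsub>G\<^esub> z = \<one>\<^bsub>G\<^esub>" if "z \<in> carrier G" for z
      using that by (intro bexI[of _ "inverse z"]) (auto simp: G_def)
  qed (auto simp: G_def mult.assoc)
  have pow: "y [^]\<^bsub>G\<^esub> m = y ^ m" for y :: 'a and m
    by (induction m) (simp_all add: G_def)
  have order: "order G = card (UNIV :: 'a set) - 1"
    by (simp add: order_def G_def card_Diff_singleton)
  have "x \<in> carrier G"
    using False by (simp add: G_def)
  then have "x [^]\<^bsub>G\<^esub> order G = \<one>\<^bsub>G\<^esub>"
    by (rule group.pow_order_eq_1[OF \<open>group G\<close>])
  then have "x ^ (card (UNIV :: 'a set) - 1) = 1"
    unfolding pow order by (simp add: G_def)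
  then show ?thesis
    using finite_UNIV_card_ge_0[where 'a = 'a] by (cases "card (UNIV :: 'a set)") simp_all
qed (simp add: finite_UNIV_card_ge_0)

lemma CHAR_eq_2_if_card_UNIV:
  assumes "card (UNIV :: 'a::{field,finite} set) = 2 ^ n" and "n > 0"
  shows "CHAR('a) = 2"
proof -
  have "prime CHAR('a)"
    by (rule prime_CHAR_semidom) (simp add: finite_imp_CHAR_pos)
  moreover have "CHAR('a) dvd 2 ^ n"
    using CHAR_dvd_CARD[where 'a = 'a] assms(1) by simp
  ultimately have "CHAR('a) dvd 2"
    by (rule prime_dvd_power)
  then show ?thesis
    by (rule primes_dvd_imp_eq[OF \<open>prime CHAR('a)\<close> two_is_prime_nat])
qed

lemma add_self_eq_0_if_CHAR_2:
  fixes x :: "'a::ring_1"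
  assumes "CHAR('a) = 2"
  shows "x + x = 0"
proof -
  have "(2::'a) = 0"
    using of_nat_CHAR[where 'a='a] assms by simp
  then show ?thesis
    by (metis mult_2 mult_zero_left)
qed

lemma diff_eq_add_if_CHAR_2:
  fixes x y :: "'a::ring_1"
  assumes "CHAR('a) = 2"
  shows "x - y = x + y"
proof -
  have "- y = y"
    by (rule add.inverse_unique) (rule add_self_eq_0_if_CHAR_2[OF assms])
  then show ?thesis
    by (metis diff_conv_add_uminus)
qed

lemma add_power_two_power:
  fixes x y :: "'a::comm_semiring_1"
  assumes "CHAR('a) = 2"
  shows "(x + y) ^ (2 ^ j) = x ^ (2 ^ j) + y ^ (2 ^ j)"
  by (rule freshmans_dream') (simp_all add: assms)

lemma sum_power_two_power:
  fixes f :: "'b \<Rightarrow> 'a::comm_semiring_1"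
  assumes "CHAR('a) = 2"
  shows "sum f A ^ (2 ^ j) = (\<Sum>i\<in>A. f i ^ (2 ^ j))"
  by (rule freshmans_dream_sum') (simp_all add: assms)

lemma surj_power_two_power:
  assumes char: "CHAR('a::{field,finite}) = 2"
  shows "surj (\<lambda>y::'a. y ^ (2 ^ j))"
proof -
  have "inj (\<lambda>y::'a. y ^ (2 ^ j))"
  proof (rule injI)
    fix a b :: 'a
    assume "a ^ (2 ^ j) = b ^ (2 ^ j)"
    then have "(a - b) ^ (2 ^ j) = 0"
      by (simp add: diff_eq_add_if_CHAR_2[OF char] add_power_two_power[OF char]
          add_self_eq_0_if_CHAR_2[OF char])
    then show "a = b"
      by simp
  qed
  then show ?thesis
    by (simp add: finite_UNIV_inj_surj)
qed

lemma power_two_power_power_two_power: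
  fixes x :: "'a::comm_monoid_mult"
  shows "(x ^ (2 ^ a)) ^ (2 ^ b) = x ^ (2 ^ (a + b))"
  by (simp add: power_mult[symmetric] power_add)

lemma power_two_power_mult_eq_self:
  fixes x :: "'a::comm_monoid_mult"
  assumes "x ^ (2 ^ a) = x"
  shows "x ^ (2 ^ (a * i)) = x"
proof (induction i)
  case (Suc i)
  have "x ^ (2 ^ (a * Suc i)) = (x ^ (2 ^ (a * i))) ^ (2 ^ a)"
    by (simp add: power_two_power_power_two_power add.commute)
  then show ?case
    using Suc assms by simp
qed simp

lemma power_two_power_eq_self:
  fixes x :: "'a::{field,finite}"
  assumes "card (UNIV :: 'a set) = 2 ^ n"
  shows "x ^ (2 ^ n) = x"
  using power_card_UNIV_eq_self[of x] assms by simp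

lemma power_two_power_mod:
  fixes x :: "'a::{field,finite}"
  assumes "card (UNIV :: 'a set) = 2 ^ n"
  shows "x ^ (2 ^ a) = x ^ (2 ^ (a mod n))"
proof -
  have "x ^ (2 ^ a) = (x ^ (2 ^ (a mod n))) ^ (2 ^ (n * (a div n)))"
    by (simp add: power_two_power_power_two_power)
  also have "\<dots> = x ^ (2 ^ (a mod n))"
    by (rule power_two_power_mult_eq_self) (rule power_two_power_eq_self[OF assms])
  finally show ?thesis .
qed

lemma power_two_power_gcd_eq_self:
  fixes x :: "'a::{field,finite}"
  assumes "card (UNIV :: 'a set) = 2 ^ n" and "k \<noteq> 0" and "x ^ (2 ^ k) = x"
  shows "x ^ (2 ^ gcd n k) = x"
proof -
  obtain u v where uv: "k * u = n * v + gcd k n"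
    using bezout_nat[OF \<open>k \<noteq> 0\<close>] by blast
  have "x = x ^ (2 ^ (k * u))"
    using power_two_power_mult_eq_self[OF assms(3)] by simp
  also have "\<dots> = (x ^ (2 ^ gcd k n)) ^ (2 ^ (n * v))"
    unfolding uv by (simp add: power_two_power_power_two_power add.commute)
  also have "\<dots> = x ^ (2 ^ gcd n k)"
    using power_two_power_mult_eq_self[OF power_two_power_eq_self[OF assms(1)], of "x ^ (2 ^ gcd k n)" v]
    by (simp add: gcd.commute)
  finally show ?thesis
    by simp
qed

lemma card_vimage_le_card_kernel_mult:
  fixes D :: "'a::{ab_group_add,finite} \<Rightarrow> 'b::{ab_group_add,finite}"
  assumes add: "\<And>x y. D (x + y) = D x + D y"
  shows "card (D -` S) \<le> card {x. D x = 0} * card S"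
proof -
  have fiber: "card {x. D x = y} \<le> card {x. D x = 0}" for y
  proof (cases "y \<in> range D")
    case True
    then obtain x0 where x0: "D x0 = y"
      by blast
    have diff: "D (x - x0) = D x - D x0" for x
      using add[of "x - x0" x0] by (simp add: algebra_simps)
    have "inj_on (\<lambda>x. x - x0) {x. D x = y}"
      by (auto intro: inj_onI)
    moreover have "(\<lambda>x. x - x0) ` {x. D x = y} \<subseteq> {x. D x = 0}"
      using x0 diff by auto
    ultimately show ?thesis
      by (meson card_inj_on_le finite)
  next
    case False
    then have "{x. D x = y} = {}"
      by auto
    then show ?thesis
      by simp
  qed
  have "card (D -` S) = card (\<Union>y\<in>S. {x. D x = y})"
    by (rule arg_cong[where f = card]) auto
  also have "\<dots> \<le> (\<Sum>y\<in>S. card {x. D x = y})"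
    by (rule card_UN_le) simp
  also have "\<dots> \<le> (\<Sum>y\<in>S. card {x. D x = 0})"
    by (intro sum_mono fiber)
  finally show ?thesis
    by (simp add: mult.commute)
qed

section \<open>Alternating forms\<close>

locale alternating_form =
  fixes K :: "'a::field set" and B :: "'a \<Rightarrow> 'a \<Rightarrow> 'a"
  assumes inverse_closed: "a \<in> K \<Longrightarrow> inverse a \<in> K"
    and form_in_K: "B x y \<in> K"
    and add_left: "B (x + y) z = B x z + B y z"
    and add_right: "B x (y + z) = B x y + B x z"
    and scale_right: "a \<in> K \<Longrightarrow> B x (a * y) = a * B x y"
    and alternating: "B x x = 0"
begin

definition K_subspace :: "'a set \<Rightarrow> bool" where
  "K_subspace V \<longleftrightarrow> 0 \<in> V \<and> (\<forall>x\<in>V. \<forall>y\<in>V. x + y \<in> V) \<and> (\<forall>a\<in>K. \<forall>x\<in>V. a * x \<in> V)"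

definition rad :: "'a set \<Rightarrow> 'a set" where
  "rad V = {v \<in> V. \<forall>u\<in>V. B v u = 0}"

definition perp :: "'a set \<Rightarrow> 'a set \<Rightarrow> 'a set" where
  "perp V S = {v \<in> V. \<forall>s\<in>S. B s v = 0}"

lemma K_subspace_add: "K_subspace V \<Longrightarrow> u \<in> V \<Longrightarrow> v \<in> V \<Longrightarrow> u + v \<in> V"
  unfolding K_subspace_def by blast

lemma K_subspace_scale: "K_subspace V \<Longrightarrow> a \<in> K \<Longrightarrow> v \<in> V \<Longrightarrow> a * v \<in> V"
  unfolding K_subspace_def by blast

lemma skew: "B y x = - B x y"
proof -
  have "0 = B (x + y) (x + y)"
    by (simp add: alternating)
  also have "\<dots> = B x y + B y x"
    unfolding add_left add_right by (simp add: alternating)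
  finally have "B x y + B y x = 0"
    by (rule sym)
  then show ?thesis
    unfolding add_eq_0_iff .
qed

lemma zero_right [simp]: "B x 0 = 0"
  using add_right[of x 0 0] by (metis add.right_neutral add_cancel_right_right)

lemma diff_right: "B x (y - z) = B x y - B x z"
  using add_right[of x "y - z" z] by simp

context
  fixes V x y
  assumes V: "K_subspace V" and x: "x \<in> V" and y: "y \<in> V" and xy: "B x y = 1"
begin

private lemma yx: "B y x = -1"
  using skew[of y x] xy by simp

private lemma neg_form_in_K: "- B u v \<in> K"
  using form_in_K[of v u] unfolding skew[of v u] .

lemma perp_hyperbolic_pair_subspace: "K_subspace (perp V {x, y})"
  using V unfolding K_subspace_def perp_def by (auto simp: add_right scale_right)

lemma x_notin_perp_hyperbolic_pair: "x \<notin> perp V {x, y}"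
  unfolding perp_def using yx by auto

lemma hyperbolic_projection_mem:
  assumes "v \<in> V"
  shows "v - B v y * x - B x v * y \<in> perp V {x, y}"
proof -
  have "v + (- B v y) * x + (- B x v) * y \<in> V"
    using K_subspace_add[OF V] K_subspace_scale[OF V neg_form_in_K] assms x y by metis
  then have "v - B v y * x - B x v * y \<in> V"
    by simp
  moreover have "B x (v - B v y * x - B x v * y) = 0" "B y (v - B v y * x - B x v * y) = 0"
    unfolding diff_right scale_right[OF form_in_K] using xy yx skew[of v y] by (simp_all add: alternating)
  ultimately show ?thesis
    by (simp add: perp_def)
qed

lemma hyperbolic_decomposition:
  "bij_betw (\<lambda>(w, a, b). w + a * x + b * y) (perp V {x, y} \<times> K \<times> K) V"
proof (rule bij_betw_imageI)
  have coords: "B x (w + a * x + b * y) = b" "B y (w + a * x + b * y) = - a"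
    if "w \<in> perp V {x, y}" "a \<in> K" "b \<in> K" for w a b
  proof -
    have "B x w = 0" "B y w = 0"
      using that(1) unfolding perp_def by simp_all
    then show "B x (w + a * x + b * y) = b" "B y (w + a * x + b * y) = - a"
      unfolding add_right scale_right[OF that(2)] scale_right[OF that(3)]
      using xy yx by (simp_all add: alternating)
  qed
  show "inj_on (\<lambda>(w, a, b). w + a * x + b * y) (perp V {x, y} \<times> K \<times> K)"
  proof (rule inj_onI)
    fix p p'
    assume "p \<in> perp V {x, y} \<times> K \<times> K" and "p' \<in> perp V {x, y} \<times> K \<times> K"
      and eq: "(\<lambda>(w, a, b). w + a * x + b * y) p = (\<lambda>(w, a, b). w + a * x + b * y) p'"
    then obtain w a b w' a' b' where p: "p = (w, a, b)" "p' = (w', a', b')"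
      and mem: "w \<in> perp V {x, y}" "a \<in> K" "b \<in> K" "w' \<in> perp V {x, y}" "a' \<in> K" "b' \<in> K"
      by auto
    have sums: "w + a * x + b * y = w' + a' * x + b' * y"
      using eq unfolding p by simp
    have "b = b'" "- a = - a'"
      using coords[of w a b] coords[of w' a' b'] mem sums by metis+
    then show "p = p'"
      using sums unfolding p by simp
  qed
  show "(\<lambda>(w, a, b). w + a * x + b * y) ` (perp V {x, y} \<times> K \<times> K) = V"
  proof (intro equalityI subsetI)
    fix v
    assume "v \<in> (\<lambda>(w, a, b). w + a * x + b * y) ` (perp V {x, y} \<times> K \<times> K)"
    then obtain w a b where "v = w + a * x + b * y" "w \<in> V" "a \<in> K" "b \<in> K"
      unfolding perp_def by auto
    then show "v \<in> V"
      using K_subspace_add[OF V] K_subspace_scale[OF V] x y by metis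
  next
    fix v
    assume "v \<in> V"
    then have "(v - B v y * x - B x v * y, B v y, B x v) \<in> perp V {x, y} \<times> K \<times> K"
      using hyperbolic_projection_mem form_in_K by simp
    then show "v \<in> (\<lambda>(w, a, b). w + a * x + b * y) ` (perp V {x, y} \<times> K \<times> K)"
      by (rule rev_image_eqI) simp
  qed
qed

lemma rad_perp_hyperbolic_pair: "rad (perp V {x, y}) = rad V"
proof (intro equalityI subsetI)
  fix v
  assume v: "v \<in> rad (perp V {x, y})"
  have "B v u = 0" if "u \<in> V" for u
  proof -
    have "v \<in> perp V {x, y}"
      using v unfolding rad_def by simp
    then have "B v x = 0" "B v y = 0"
      unfolding perp_def by (simp_all add: skew[of x v] skew[of y v])
    moreover have "B v (u - B u y * x - B x u * y) = 0"
      using v hyperbolic_projection_mem[OF that] unfolding rad_def by simp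
    ultimately show ?thesis
      unfolding diff_right scale_right[OF form_in_K] by simp
  qed
  then show "v \<in> rad V"
    using v unfolding rad_def perp_def by simp
next
  fix v
  assume "v \<in> rad V"
  then show "v \<in> rad (perp V {x, y})"
    using x y skew[of x v] skew[of y v] unfolding rad_def perp_def by auto
qed

end

theorem card_subspace_eq_card_rad_mult:
  assumes "finite V" and "K_subspace V"
  shows "\<exists>j. card V = card (rad V) * card K ^ (2 * j)"
  using assms
proof (induction "card V" arbitrary: V rule: less_induct)
  case (less V)
  show ?case
  proof (cases "\<forall>x\<in>V. \<forall>u\<in>V. B x u = 0")
    case True
    then have "rad V = V"
      unfolding rad_def by blast
    then show ?thesis
      by (intro exI[of _ 0]) simp
  next
    case False
    then obtain x u where x: "x \<in> V" and u: "u \<in> V" and xu: "B x u \<noteq> 0"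
      by blast
    define y where "y = inverse (B x u) * u"
    have y: "y \<in> V"
      unfolding y_def using less.prems(2) u by (intro K_subspace_scale inverse_closed form_in_K)
    have xy: "B x y = 1"
      unfolding y_def scale_right[OF inverse_closed[OF form_in_K]] using xu by simp
    define W where "W = perp V {x, y}"
    have "W \<subset> V"
      using x_notin_perp_hyperbolic_pair[OF less.prems(2) x y xy] x unfolding W_def perp_def by blast
    have "card W < card V"
      using less.prems(1) \<open>W \<subset> V\<close> by (rule psubset_card_mono)
    moreover have "finite W"
      using finite_subset[OF psubset_imp_subset[OF \<open>W \<subset> V\<close>] less.prems(1)] .
    ultimately obtain j where j: "card W = card (rad W) * card K ^ (2 * j)"
      using less.hyps perp_hyperbolic_pair_subspace[OF less.prems(2) x y xy, folded W_def]
      by blast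
    have "card V = card W * (card K * card K)"
      using bij_betw_same_card[OF hyperbolic_decomposition[OF less.prems(2) x y xy, folded W_def]]
      by (simp add: card_cartesian_product)
    also have "\<dots> = card (rad V) * card K ^ (2 * Suc j)"
      unfolding j rad_perp_hyperbolic_pair[OF less.prems(2) x y xy, folded W_def]
      by (simp add: power_add mult_ac)
    finally show ?thesis
      by (rule exI)
  qed
qed

end

section \<open>Linearized polynomials\<close>

fun linearized :: "('a::field \<Rightarrow> 'a) \<Rightarrow> 'a list \<Rightarrow> 'a \<Rightarrow> 'a" where
  "linearized \<sigma> [] x = 0"
| "linearized \<sigma> (a # as) x = a * x + linearized \<sigma> as (\<sigma> x)"

lemma linearized_add:
  assumes "\<And>x y. \<sigma> (x + y) = \<sigma> x + \<sigma> y"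
  shows "linearized \<sigma> as (x + y) = linearized \<sigma> as x + linearized \<sigma> as y"
  by (induction as arbitrary: x y) (simp_all add: assms algebra_simps)

lemma linearized_zero:
  assumes "\<And>x y. \<sigma> (x + y) = \<sigma> x + \<sigma> y"
  shows "linearized \<sigma> as 0 = 0"
  using linearized_add[OF assms, of as 0 0] by (metis add.right_neutral add_cancel_right_right)

lemma linearized_divide:
  fixes \<sigma> :: "'a::field \<Rightarrow> 'a"
  assumes add: "\<And>x y. \<sigma> (x + y) = \<sigma> x + \<sigma> y"
    and mult: "\<And>x y. \<sigma> (x * y) = \<sigma> x * \<sigma> y"
  shows "\<exists>b r. length b = length a - 1 \<and>
    (\<forall>x. linearized \<sigma> a x = linearized \<sigma> b (\<sigma> x - c * x) + r * x)"
proof (induction a arbitrary: c)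
  case Nil
  show ?case
    by (intro exI[of _ "[]"] exI[of _ 0]) simp
next
  case (Cons a0 as)
  show ?case
  proof (cases "as = []")
    case True
    then show ?thesis
      by (intro exI[of _ "[]"] exI[of _ a0]) simp
  next
    case False
    obtain b r where len: "length b = length as - 1"
      and div: "\<And>y. linearized \<sigma> as y = linearized \<sigma> b (\<sigma> y - \<sigma> c * y) + r * y"
      using Cons.IH[of "\<sigma> c"] by blast
    have "\<sigma> (u - v) = \<sigma> u - \<sigma> v" for u v
      using add[of "u - v" v] by (simp add: algebra_simps)
    then have \<sigma>_step: "\<sigma> (\<sigma> x - c * x) = \<sigma> (\<sigma> x) - \<sigma> c * \<sigma> x" for x
      using mult by simp
    have "linearized \<sigma> (a0 # as) x = linearized \<sigma> (r # b) (\<sigma> x - c * x) + (a0 + r * c) * x" for x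
    proof -
      have "linearized \<sigma> (r # b) (\<sigma> x - c * x)
          = r * (\<sigma> x - c * x) + linearized \<sigma> b (\<sigma> (\<sigma> x) - \<sigma> c * \<sigma> x)"
        by (simp only: linearized.simps \<sigma>_step)
      then show ?thesis
        using div[of "\<sigma> x"] by (simp add: algebra_simps)
    qed
    moreover have "length (r # b) = length (a0 # as) - 1"
      using len False by simp
    ultimately show ?thesis
      by (intro exI[of _ "r # b"] exI[of _ "a0 + r * c"]) blast
  qed
qed

lemma card_eigenspace_le_card_fixed_points:
  fixes \<sigma> :: "'a::{field,finite} \<Rightarrow> 'a"
  assumes mult: "\<And>x y. \<sigma> (x * y) = \<sigma> x * \<sigma> y" and one: "\<sigma> 1 = 1"
    and w: "w \<noteq> 0" "\<sigma> w = c * w"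
  shows "card {x. \<sigma> x = c * x} \<le> card {x. \<sigma> x = x}"
proof -
  have \<sigma>_inverse: "\<sigma> w * \<sigma> (inverse w) = 1"
    using mult[of w "inverse w"] one w(1) by simp
  have "c \<noteq> 0"
  proof
    assume "c = 0"
    then show False
      using \<sigma>_inverse w(2) by simp
  qed
  have "\<sigma> (x / w) = x / w" if "\<sigma> x = c * x" for x
  proof -
    have "\<sigma> (x / w) = \<sigma> x * \<sigma> (inverse w)"
      unfolding divide_inverse by (rule mult)
    also have "\<dots> = c * x * inverse (c * w)"
      using that inverse_unique[OF \<sigma>_inverse] w(2) by simp
    also have "\<dots> = x / w"
      using \<open>c \<noteq> 0\<close> by (simp add: divide_inverse)
    finally show ?thesis .
  qed
  then have "(\<lambda>x. x / w) ` {x. \<sigma> x = c * x} \<subseteq> {x. \<sigma> x = x}"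
    by blast
  moreover have "inj_on (\<lambda>x. x / w) {x. \<sigma> x = c * x}"
    using w(1) by (auto intro: inj_onI)
  ultimately show ?thesis
    by (meson card_inj_on_le finite)
qed

theorem card_linearized_roots_le:
  fixes \<sigma> :: "'a::{field,finite} \<Rightarrow> 'a"
  assumes add: "\<And>x y. \<sigma> (x + y) = \<sigma> x + \<sigma> y"
    and mult: "\<And>x y. \<sigma> (x * y) = \<sigma> x * \<sigma> y"
    and one: "\<sigma> 1 = 1"
    and nonzero: "\<exists>x. linearized \<sigma> a x \<noteq> 0"
  shows "card {x. linearized \<sigma> a x = 0} \<le> card {x. \<sigma> x = x} ^ (length a - 1)"
  using nonzero
proof (induction "length a" arbitrary: a rule: less_induct)
  case (less a)
  have "\<sigma> 0 = 0"
    using add[of 0 0] by (metis add.right_neutral add_cancel_right_right)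
  then have "{0} \<subseteq> {x. \<sigma> x = x}"
    by simp
  then have fixed_pos: "card {x. \<sigma> x = x} \<ge> 1"
    using card_mono[of "{x. \<sigma> x = x}" "{0}"] by simp
  show ?case
  proof (cases "\<forall>x. linearized \<sigma> a x = 0 \<longrightarrow> x = 0")
    case True
    then have "{x. linearized \<sigma> a x = 0} \<subseteq> {0}"
      by auto
    then have "card {x. linearized \<sigma> a x = 0} \<le> 1"
      using card_mono[of "{0}" "{x. linearized \<sigma> a x = 0}"] by simp
    also have "1 \<le> card {x. \<sigma> x = x} ^ (length a - 1)"
      using fixed_pos by simp
    finally show ?thesis .
  next
    case False
    then obtain w where w: "w \<noteq> 0" "linearized \<sigma> a w = 0"
      by blast
    txt \<open>A nonzero root \<open>w\<close> splits off the right factor \<open>\<sigma> - c\<close> with \<open>c = \<sigma> w / w\<close>.\<close>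
    define c where "c = \<sigma> w / w"
    obtain b r where len: "length b = length a - 1"
      and div: "\<And>x. linearized \<sigma> a x = linearized \<sigma> b (\<sigma> x - c * x) + r * x"
      using linearized_divide[OF add mult, of a c] by blast
    have \<sigma>w: "\<sigma> w = c * w"
      unfolding c_def using w(1) by simp
    then have "r = 0"
      using div[of w] w linearized_zero[OF add] by simp
    then have ker: "{x. linearized \<sigma> a x = 0} = (\<lambda>x. \<sigma> x - c * x) -` {y. linearized \<sigma> b y = 0}"
      using div by auto
    obtain x where "linearized \<sigma> a x \<noteq> 0"
      using less.prems by blast
    then have b: "\<exists>y. linearized \<sigma> b y \<noteq> 0"
      using div[of x] \<open>r = 0\<close> by auto
    then have "b \<noteq> []"
      by auto
    have "length b < length a"
      using len \<open>b \<noteq> []\<close> by (cases b) auto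
    then have IH: "card {y. linearized \<sigma> b y = 0} \<le> card {x. \<sigma> x = x} ^ (length b - 1)"
      by (rule less.hyps[OF _ b])
    have "card {x. linearized \<sigma> a x = 0}
        \<le> card {x. \<sigma> x - c * x = 0} * card {y. linearized \<sigma> b y = 0}"
      unfolding ker by (rule card_vimage_le_card_kernel_mult) (simp add: add algebra_simps)
    also have "\<dots> \<le> card {x. \<sigma> x = x} * card {x. \<sigma> x = x} ^ (length b - 1)"
      using card_eigenspace_le_card_fixed_points[OF mult one w(1) \<sigma>w] IH
      by (intro mult_le_mono) simp_all
    also have "\<dots> = card {x. \<sigma> x = x} ^ Suc (length b - 1)"
      by simp
    also have "Suc (length b - 1) = length a - 1"
      using len \<open>b \<noteq> []\<close> by (cases b) auto
    finally show ?thesis .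
  qed
qed

section \<open>The relative trace\<close>

lemma rel_trace_add:
  fixes x y :: "'a::field"
  assumes "CHAR('a) = 2"
  shows "rel_trace d n (x + y) = rel_trace d n x + rel_trace d n y"
  unfolding rel_trace_def by (simp add: add_power_two_power[OF assms] sum.distrib)

lemma rel_trace_zero: "rel_trace d n (0::'a::field) = 0"
  unfolding rel_trace_def by (simp add: power_0_left)

lemma rel_trace_scale:
  fixes c z :: "'a::field"
  assumes "c ^ (2 ^ d) = c"
  shows "rel_trace d n (c * z) = c * rel_trace d n z"
  unfolding rel_trace_def using power_two_power_mult_eq_self[OF assms]
  by (simp add: power_mult_distrib sum_distrib_left)

lemma rel_trace_power_two_power_eq:
  fixes z :: "'a::{field,finite}"
  assumes char: "CHAR('a) = 2" and card: "card (UNIV :: 'a set) = 2 ^ n" and "d dvd n"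
  shows "rel_trace d n z ^ (2 ^ d) = rel_trace d n z"
proof -
  define s where "s = n div d"
  define g where "g i = z ^ (2 ^ (d * i))" for i
  have "g s = g 0"
    using power_two_power_eq_self[OF card, of z] \<open>d dvd n\<close> unfolding g_def s_def by simp
  have "rel_trace d n z ^ (2 ^ d) = (\<Sum>i<s. g (Suc i))"
    unfolding rel_trace_def s_def[symmetric] g_def sum_power_two_power[OF char]
    by (simp add: power_two_power_power_two_power add.commute)
  also have "\<dots> = (\<Sum>i<s. g i)"
    using sum.lessThan_Suc_shift[of g s] sum.lessThan_Suc[of g s] \<open>g s = g 0\<close>
    by (simp add: add.commute)
  finally show ?thesis
    unfolding rel_trace_def s_def g_def .
qed

lemma rel_trace_frobenius:
  fixes z :: "'a::{field,finite}"
  assumes char: "CHAR('a) = 2" and card: "card (UNIV :: 'a set) = 2 ^ n" and "d dvd n"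
  shows "rel_trace d n (z ^ (2 ^ (d * t))) = rel_trace d n z"
proof (induction t)
  case (Suc t)
  have "rel_trace d n (z ^ (2 ^ (d * Suc t))) = rel_trace d n ((z ^ (2 ^ (d * t))) ^ (2 ^ d))"
    by (simp add: power_two_power_power_two_power add.commute)
  also have "\<dots> = rel_trace d n (z ^ (2 ^ (d * t))) ^ (2 ^ d)"
    unfolding rel_trace_def sum_power_two_power[OF char]
    by (simp add: power_two_power_power_two_power add_ac)
  also have "\<dots> = rel_trace d n z"
    using Suc rel_trace_power_two_power_eq[OF assms] by simp
  finally show ?case .
qed simp

lemma card_rel_trace_kernel_le:
  assumes "d dvd n" and "0 < d" and "0 < n"
  shows "card {z::'a::{field,finite}. rel_trace d n z = 0} \<le> 2 ^ (n - d)"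
proof -
  define s where "s = n div d"
  have n: "n = d * s" and "s > 0"
    using assms unfolding s_def by auto
  define p :: "'a poly" where "p = (\<Sum>i<s. Polynomial.monom 1 (2 ^ (d * i)))"
  have eval: "poly p z = rel_trace d n z" for z
    unfolding p_def rel_trace_def s_def by (simp add: poly_sum poly_monom)
  have "Polynomial.coeff p 1 = (\<Sum>i<s. if i = 0 then 1 else 0)"
    unfolding p_def coeff_sum coeff_monom using \<open>0 < d\<close>
    by (intro sum.cong refl) (simp add: power_eq_1_iff)
  also have "\<dots> = 1"
    using \<open>s > 0\<close> by simp
  finally have "p \<noteq> 0"
    by auto
  have "degree p \<le> 2 ^ (d * (s - 1))"
    unfolding p_def
  proof (rule degree_sum_le)
    fix i
    assume "i \<in> {..<s}"
    then have "(2::nat) ^ (d * i) \<le> 2 ^ (d * (s - 1))"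
      by (intro power_increasing mult_le_mono2) auto
    then show "degree (Polynomial.monom (1::'a) (2 ^ (d * i))) \<le> 2 ^ (d * (s - 1))"
      using degree_monom_le order_trans by blast
  qed simp
  moreover have "card {z. poly p z = 0} \<le> degree p"
    by (rule card_poly_roots_bound[OF \<open>p \<noteq> 0\<close>])
  moreover have "d * (s - 1) = n - d"
    unfolding n by (simp add: right_diff_distrib')
  ultimately show ?thesis
    using eval by simp
qed

lemma exists_rel_trace_nonzero:
  assumes "card (UNIV :: 'a::{field,finite} set) = 2 ^ n" and "d dvd n" and "0 < d" and "0 < n"
  shows "\<exists>z::'a. rel_trace d n z \<noteq> 0"
proof -
  have "card {z::'a. rel_trace d n z = 0} \<le> 2 ^ (n - d)"
    using card_rel_trace_kernel_le assms(2-4) .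
  also have "\<dots> < card (UNIV :: 'a set)"
    unfolding assms(1) using assms(3,4) by (intro power_strict_increasing) auto
  finally have "{z::'a. rel_trace d n z = 0} \<noteq> UNIV"
    by auto
  then show ?thesis
    by auto
qed

lemma card_fixed_field:
  assumes char: "CHAR('a::{field,finite}) = 2" and card: "card (UNIV :: 'a set) = 2 ^ n"
    and "d dvd n" and "0 < d" and "0 < n"
  shows "card {x::'a. x ^ (2 ^ d) = x} = 2 ^ d"
proof (rule antisym)
  define p :: "'a poly" where "p = Polynomial.monom 1 (2 ^ d) - Polynomial.monom 1 1"
  have eval: "poly p x = x ^ (2 ^ d) - x" for x
    unfolding p_def by (simp add: poly_monom)
  have "(1::nat) < 2 ^ d"
    using one_less_power[of "2::nat" d] \<open>0 < d\<close> by simp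
  then have "Polynomial.coeff p (2 ^ d) = 1"
    unfolding p_def by simp
  then have "p \<noteq> 0"
    by auto
  have "degree p \<le> 2 ^ d"
    unfolding p_def by (rule degree_diff_le) (auto intro: order_trans[OF degree_monom_le])
  moreover have "card {x. poly p x = 0} \<le> degree p"
    by (rule card_poly_roots_bound[OF \<open>p \<noteq> 0\<close>])
  ultimately show "card {x::'a. x ^ (2 ^ d) = x} \<le> 2 ^ d"
    using eval by simp
next
  txt \<open>The trace maps onto the fixed field with kernel of size at most \<open>2 ^ (n - d)\<close>.\<close>
  have "rel_trace d n -` {x::'a. x ^ (2 ^ d) = x} = UNIV"
    using rel_trace_power_two_power_eq[OF char card \<open>d dvd n\<close>] by auto
  then have "2 ^ n \<le> card {z::'a. rel_trace d n z = 0} * card {x::'a. x ^ (2 ^ d) = x}"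
    using card_vimage_le_card_kernel_mult[of "rel_trace d n" "{x::'a. x ^ (2 ^ d) = x}"]
      rel_trace_add[OF char] card by simp
  also have "\<dots> \<le> 2 ^ (n - d) * card {x::'a. x ^ (2 ^ d) = x}"
    by (intro mult_le_mono1 card_rel_trace_kernel_le) (use assms in auto)
  finally have "2 ^ (n - d) * 2 ^ d \<le> 2 ^ (n - d) * card {x::'a. x ^ (2 ^ d) = x}"
    using dvd_imp_le[OF \<open>d dvd n\<close> \<open>0 < n\<close>] by (simp flip: power_add)
  then show "2 ^ d \<le> card {x::'a. x ^ (2 ^ d) = x}"
    by simp
qed

section \<open>The bilinear form of \<open>f_ab\<close>\<close>

definition B_ab :: "nat \<Rightarrow> nat \<Rightarrow> nat \<Rightarrow> 'a::field \<Rightarrow> 'a \<Rightarrow> 'a \<Rightarrow> 'a \<Rightarrow> 'a" where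
  "B_ab d n k \<alpha> \<beta> x y = rel_trace d n
     (\<alpha> * (x ^ (2 ^ (2 * k)) * y + x * y ^ (2 ^ (2 * k))) + \<beta> * (x ^ (2 ^ k) * y + x * y ^ (2 ^ k)))"

lemma assoc_bilinear_f_ab:
  fixes \<alpha> \<beta> :: "'a::field"
  assumes char: "CHAR('a) = 2"
  shows "assoc_bilinear (f_ab d n k \<alpha> \<beta>) = B_ab d n k \<alpha> \<beta>"
proof (intro ext)
  fix x y :: 'a
  define Q where "Q = (2::nat) ^ k"
  define Q2 where "Q2 = (2::nat) ^ (2 * k)"
  have Q: "(x + y) ^ (Q + 1) = x ^ (Q + 1) + y ^ (Q + 1) + (x ^ Q * y + x * y ^ Q)"
    unfolding Q_def using add_power_two_power[OF char, of x y k] by (simp add: algebra_simps)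
  have Q2: "(x + y) ^ (Q2 + 1) = x ^ (Q2 + 1) + y ^ (Q2 + 1) + (x ^ Q2 * y + x * y ^ Q2)"
    unfolding Q2_def using add_power_two_power[OF char, of x y "2 * k"] by (simp add: algebra_simps)
  have "\<alpha> * (x + y) ^ (Q2 + 1) + \<beta> * (x + y) ^ (Q + 1) =
      (\<alpha> * x ^ (Q2 + 1) + \<beta> * x ^ (Q + 1)) + (\<alpha> * y ^ (Q2 + 1) + \<beta> * y ^ (Q + 1))
      + (\<alpha> * (x ^ Q2 * y + x * y ^ Q2) + \<beta> * (x ^ Q * y + x * y ^ Q))"
    unfolding Q Q2 by (simp add: algebra_simps)
  then show "assoc_bilinear (f_ab d n k \<alpha> \<beta>) x y = B_ab d n k \<alpha> \<beta> x y"
    unfolding assoc_bilinear_def f_ab_def B_ab_def Q_def[symmetric] Q2_def[symmetric]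
    by (simp add: rel_trace_add[OF char])
qed

lemma B_ab_add_left:
  fixes \<alpha> \<beta> x x' y :: "'a::field"
  assumes char: "CHAR('a) = 2"
  shows "B_ab d n k \<alpha> \<beta> (x + x') y = B_ab d n k \<alpha> \<beta> x y + B_ab d n k \<alpha> \<beta> x' y"
  unfolding B_ab_def rel_trace_add[OF char, symmetric] add_power_two_power[OF char]
  by (rule arg_cong[where f = "rel_trace d n"]) (simp add: algebra_simps)

lemma B_ab_commute: "B_ab d n k \<alpha> \<beta> x y = B_ab d n k \<alpha> \<beta> y x"
  unfolding B_ab_def by (rule arg_cong[where f = "rel_trace d n"]) (simp add: algebra_simps)

lemma B_ab_alternating:
  fixes \<alpha> \<beta> x :: "'a::field"
  assumes char: "CHAR('a) = 2"
  shows "B_ab d n k \<alpha> \<beta> x x = 0"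
  unfolding B_ab_def by (simp add: add_self_eq_0_if_CHAR_2[OF char] mult.commute[of x] rel_trace_zero)

lemma B_ab_scale_left:
  fixes \<alpha> \<beta> x y c :: "'a::field"
  assumes c: "c ^ (2 ^ d) = c" and "d dvd k"
  shows "B_ab d n k \<alpha> \<beta> (c * x) y = c * B_ab d n k \<alpha> \<beta> x y"
proof -
  obtain t where k: "k = d * t"
    using \<open>d dvd k\<close> by blast
  have c1: "c ^ (2 ^ k) = c"
    unfolding k by (rule power_two_power_mult_eq_self[OF c])
  have c2: "c ^ (2 ^ (2 * k)) = c"
    using power_two_power_mult_eq_self[OF c, of "2 * t"] k by (simp add: mult_ac)
  show ?thesis
    unfolding B_ab_def rel_trace_scale[OF c, symmetric]
    using c2 by (simp add: power_mult_distrib c1 c2 mult.commute[of 2 k] algebra_simps)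
qed

lemma alternating_form_B_ab:
  fixes \<alpha> \<beta> :: "'a::{field,finite}"
  assumes char: "CHAR('a) = 2" and card: "card (UNIV :: 'a set) = 2 ^ n"
    and "d dvd n" and "d dvd k"
  shows "alternating_form {c::'a. c ^ (2 ^ d) = c} (B_ab d n k \<alpha> \<beta>)"
proof
  show "inverse a \<in> {c. c ^ (2 ^ d) = c}" if "a \<in> {c. c ^ (2 ^ d) = c}" for a :: 'a
    using that by (simp add: power_inverse)
  show "B_ab d n k \<alpha> \<beta> x y \<in> {c. c ^ (2 ^ d) = c}" for x y
    unfolding B_ab_def using rel_trace_power_two_power_eq[OF char card \<open>d dvd n\<close>] by simp
  show "B_ab d n k \<alpha> \<beta> (x + y) z = B_ab d n k \<alpha> \<beta> x z + B_ab d n k \<alpha> \<beta> y z" for x y z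
    by (rule B_ab_add_left[OF char])
  show "B_ab d n k \<alpha> \<beta> x (y + z) = B_ab d n k \<alpha> \<beta> x y + B_ab d n k \<alpha> \<beta> x z" for x y z
    using B_ab_add_left[OF char] B_ab_commute by metis
  show "B_ab d n k \<alpha> \<beta> x (a * y) = a * B_ab d n k \<alpha> \<beta> x y" if "a \<in> {c. c ^ (2 ^ d) = c}" for a x y
    using that \<open>d dvd k\<close> by (simp add: B_ab_scale_left B_ab_commute[of _ _ _ _ _ x])
  show "B_ab d n k \<alpha> \<beta> x x = 0" for x
    by (rule B_ab_alternating[OF char])
qed

definition L_ab :: "nat \<Rightarrow> 'a::field \<Rightarrow> 'a \<Rightarrow> 'a \<Rightarrow> 'a" where
  "L_ab k \<alpha> \<beta> =
     linearized (\<lambda>x. x ^ (2 ^ k)) [\<alpha>, \<beta> ^ (2 ^ k), 0, \<beta> ^ (2 ^ (2 * k)), \<alpha> ^ (2 ^ (2 * k))]"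

lemma L_ab_eq:
  fixes x :: "'a::field"
  shows "L_ab k \<alpha> \<beta> x = \<alpha> * x ^ (2 ^ (k * 0)) + \<beta> ^ (2 ^ k) * x ^ (2 ^ (k * 1))
     + \<beta> ^ (2 ^ (2 * k)) * x ^ (2 ^ (k * 3)) + \<alpha> ^ (2 ^ (2 * k)) * x ^ (2 ^ (k * 4))"
proof -
  have "((x ^ (2 ^ k)) ^ (2 ^ k)) ^ (2 ^ k) = x ^ (2 ^ (k * 3))"
    "(((x ^ (2 ^ k)) ^ (2 ^ k)) ^ (2 ^ k)) ^ (2 ^ k) = x ^ (2 ^ (k * 4))"
    unfolding power_two_power_power_two_power by (rule arg_cong[where f = "\<lambda>m. x ^ (2 ^ m)"], simp)+
  then show ?thesis
    unfolding L_ab_def by simp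
qed

lemma B_ab_eq_rel_trace_L_ab:
  fixes \<alpha> \<beta> x y :: "'a::{field,finite}"
  assumes char: "CHAR('a) = 2" and card: "card (UNIV :: 'a set) = 2 ^ n"
    and "d dvd n" and "d dvd k"
  shows "B_ab d n k \<alpha> \<beta> x y = rel_trace d n (y ^ (2 ^ (2 * k)) * L_ab k \<alpha> \<beta> x)"
proof -
  obtain t where k: "k = d * t"
    using \<open>d dvd k\<close> by blast
  note add = rel_trace_add[OF char]
  have k4: "k * 4 = k + (k + (k + k))" and k3: "k * 3 = k + (k + k)"
    by simp_all
  have frob2: "rel_trace d n z = rel_trace d n (z ^ (2 ^ (2 * k)))" for z :: 'a
    using rel_trace_frobenius[OF char card \<open>d dvd n\<close>, of z "2 * t"] k by (simp add: mult_ac)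
  have frob1: "rel_trace d n z = rel_trace d n (z ^ (2 ^ k))" for z :: 'a
    using rel_trace_frobenius[OF char card \<open>d dvd n\<close>, of z t] k by simp
  have "B_ab d n k \<alpha> \<beta> x y = rel_trace d n (\<alpha> * x ^ (2 ^ (2 * k)) * y)
      + rel_trace d n (\<alpha> * x * y ^ (2 ^ (2 * k)))
      + rel_trace d n (\<beta> * x ^ (2 ^ k) * y) + rel_trace d n (\<beta> * x * y ^ (2 ^ k))"
    unfolding B_ab_def add[symmetric] by (simp add: algebra_simps)
  also have "rel_trace d n (\<alpha> * x ^ (2 ^ (2 * k)) * y)
      = rel_trace d n (\<alpha> ^ (2 ^ (2 * k)) * x ^ (2 ^ (k * 4)) * y ^ (2 ^ (2 * k)))"
    by (subst frob2)
      (simp add: power_mult_distrib power_two_power_power_two_power algebra_simps mult_2 mult_2_right k3 k4)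
  also have "rel_trace d n (\<beta> * x ^ (2 ^ k) * y)
      = rel_trace d n (\<beta> ^ (2 ^ (2 * k)) * x ^ (2 ^ (k * 3)) * y ^ (2 ^ (2 * k)))"
    by (subst frob2) (simp add: power_mult_distrib power_two_power_power_two_power algebra_simps
        mult_2 mult_2_right k3 k4 numeral_3_eq_3)
  also have "rel_trace d n (\<beta> * x * y ^ (2 ^ k))
      = rel_trace d n (\<beta> ^ (2 ^ k) * x ^ (2 ^ (k * 1)) * y ^ (2 ^ (2 * k)))"
    by (subst frob1)
      (simp add: power_mult_distrib power_two_power_power_two_power algebra_simps mult_2 mult_2_right k3 k4)
  finally show ?thesis
    unfolding L_ab_eq add[symmetric] by (simp add: algebra_simps mult_2 mult_2_right k3 k4)
qed

lemma radical_B_ab_subset_L_ab_roots: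
  fixes \<alpha> \<beta> :: "'a::{field,finite}"
  assumes char: "CHAR('a) = 2" and card: "card (UNIV :: 'a set) = 2 ^ n"
    and "d dvd n" and "d dvd k" and "0 < d" and "0 < n"
  shows "radical (B_ab d n k \<alpha> \<beta>) \<subseteq> {x. L_ab k \<alpha> \<beta> x = 0}"
proof (rule subsetI, rule CollectI, rule ccontr)
  fix x
  assume x: "x \<in> radical (B_ab d n k \<alpha> \<beta>)" and L: "L_ab k \<alpha> \<beta> x \<noteq> 0"
  obtain z :: 'a where z: "rel_trace d n z \<noteq> 0"
    using exists_rel_trace_nonzero[OF card \<open>d dvd n\<close> \<open>0 < d\<close> \<open>0 < n\<close>] by blast
  obtain y where y: "y ^ (2 ^ (2 * k)) = z / L_ab k \<alpha> \<beta> x"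
    using surj_power_two_power[OF char] by (metis surjD)
  have "B_ab d n k \<alpha> \<beta> x y = rel_trace d n z"
    unfolding B_ab_eq_rel_trace_L_ab[OF char card \<open>d dvd n\<close> \<open>d dvd k\<close>] y using L by simp
  then show False
    using x z unfolding radical_def by simp
qed

lemma mult_mod_mult_neq:
  fixes d s t i j :: nat
  assumes "coprime s t" and "0 < d" and "i < j" and "j - i < s"
  shows "(d * t * i) mod (d * s) \<noteq> (d * t * j) mod (d * s)"
proof
  assume "(d * t * i) mod (d * s) = (d * t * j) mod (d * s)"
  moreover have "d * t * i \<le> d * t * j"
    using \<open>i < j\<close> by simp
  ultimately have "d * s dvd d * t * j - d * t * i"
    using mod_eq_dvd_iff_nat by metis
  then have "d * s dvd d * (t * (j - i))"
    by (simp add: diff_mult_distrib2 mult_ac)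
  then have "s dvd j - i"
    using \<open>0 < d\<close> \<open>coprime s t\<close> by (simp add: coprime_dvd_mult_right_iff)
  then show False
    using assms(3,4) by (simp add: dvd_imp_le leD)
qed

lemma L_ab_nonzero:
  fixes \<alpha> \<beta> :: "'a::{field,finite}"
  assumes card: "card (UNIV :: 'a set) = 2 ^ n" and "0 < n"
    and s: "5 \<le> n div gcd n k" and ab: "(\<alpha>, \<beta>) \<noteq> (0, 0)"
  shows "\<exists>x. L_ab k \<alpha> \<beta> x \<noteq> 0"
proof -
  define d where "d = gcd n k"
  have "0 < d"
    unfolding d_def using \<open>0 < n\<close> by simp
  obtain t where k: "k = d * t"
    unfolding d_def by (metis gcd_dvd2 dvdE)
  have n: "d * (n div d) = n"
    unfolding d_def by simp
  have "k div d = t"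
    using k \<open>0 < d\<close> by simp
  then have "coprime (n div d) t"
    using div_gcd_coprime[of n k] \<open>0 < n\<close> unfolding d_def by simp
  define e where "e j = (k * j) mod n" for j
  have distinct: "(2::nat) ^ e i \<noteq> 2 ^ e j" if "i < j" "j \<le> 4" for i j
  proof -
    have "j - i < n div d"
      using that s unfolding d_def by simp
    then have "(d * t * i) mod (d * (n div d)) \<noteq> (d * t * j) mod (d * (n div d))"
      by (rule mult_mod_mult_neq[OF \<open>coprime (n div d) t\<close> \<open>0 < d\<close> \<open>i < j\<close>])
    then have "e i \<noteq> e j"
      unfolding e_def k n .
    then show ?thesis
      by simp
  qed
  define p :: "'a poly" where
    "p = Polynomial.monom \<alpha> (2 ^ e 0) + Polynomial.monom (\<beta> ^ (2 ^ k)) (2 ^ e 1)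
       + Polynomial.monom (\<beta> ^ (2 ^ (2 * k))) (2 ^ e 3) + Polynomial.monom (\<alpha> ^ (2 ^ (2 * k))) (2 ^ e 4)"
  have eval: "poly p x = L_ab k \<alpha> \<beta> x" for x
    unfolding p_def L_ab_eq e_def using power_two_power_mod[OF card] by (simp add: poly_monom)
  have "degree (Polynomial.monom c (2 ^ e j)) \<le> 2 ^ (n - 1)" for c :: 'a and j
  proof -
    have "e j \<le> n - 1"
      unfolding e_def using \<open>0 < n\<close> by (simp add: less_Suc_eq_le[symmetric])
    then have "(2::nat) ^ e j \<le> 2 ^ (n - 1)"
      by (rule power_increasing) simp
    then show ?thesis
      using degree_monom_le order_trans by blast
  qed
  then have "degree p \<le> 2 ^ (n - 1)"
    unfolding p_def by (intro degree_add_le)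
  have "p \<noteq> 0"
  proof (cases "\<alpha> = 0")
    case False
    have "Polynomial.coeff p (2 ^ e 0) = \<alpha>"
      unfolding p_def using distinct[of 0 1] distinct[of 0 3] distinct[of 0 4] by simp
    then show ?thesis
      using False by auto
  next
    case True
    then have "\<beta> \<noteq> 0"
      using ab by simp
    have "Polynomial.coeff p (2 ^ e 1) = \<beta> ^ (2 ^ k)"
      unfolding p_def using True distinct[of 1 3] by simp
    then show ?thesis
      using \<open>\<beta> \<noteq> 0\<close> by auto
  qed
  have "card {x. poly p x = 0} \<le> degree p"
    by (rule card_poly_roots_bound[OF \<open>p \<noteq> 0\<close>])
  also have "\<dots> < 2 ^ n"
    using \<open>degree p \<le> 2 ^ (n - 1)\<close> \<open>0 < n\<close>
    by (meson diff_less le_less_trans one_less_numeral_iff power_strict_increasing_iff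
        semiring_norm(76) zero_less_one)
  finally have "{x. poly p x = 0} \<noteq> (UNIV :: 'a set)"
    using card by auto
  then show ?thesis
    using eval by auto
qed

lemma card_radical_B_ab_le:
  fixes \<alpha> \<beta> :: "'a::{field,finite}"
  assumes char: "CHAR('a) = 2" and card: "card (UNIV :: 'a set) = 2 ^ n"
    and "0 < n" and "0 < k" and s: "5 \<le> n div gcd n k" and ab: "(\<alpha>, \<beta>) \<noteq> (0, 0)"
  shows "card (radical (B_ab (gcd n k) n k \<alpha> \<beta>)) \<le> (2 ^ gcd n k) ^ 4"
proof -
  have "card (radical (B_ab (gcd n k) n k \<alpha> \<beta>)) \<le> card {x. L_ab k \<alpha> \<beta> x = 0}"
    using radical_B_ab_subset_L_ab_roots[OF char card] \<open>0 < n\<close> by (intro card_mono) simp_all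
  also have "\<dots> \<le> card {x::'a. x ^ (2 ^ k) = x} ^
      (length [\<alpha>, \<beta> ^ (2 ^ k), 0, \<beta> ^ (2 ^ (2 * k)), \<alpha> ^ (2 ^ (2 * k))] - 1)"
    unfolding L_ab_def
    by (rule card_linearized_roots_le[where \<sigma> = "\<lambda>x::'a. x ^ (2 ^ k)",
          OF _ _ _ L_ab_nonzero[OF card \<open>0 < n\<close> s ab, unfolded L_ab_def]])
      (simp_all add: add_power_two_power[OF char] power_mult_distrib)
  also have "\<dots> = card {x::'a. x ^ (2 ^ k) = x} ^ 4"
    by (simp add: eval_nat_numeral)
  also have "card {x::'a. x ^ (2 ^ k) = x} \<le> card {x::'a. x ^ (2 ^ gcd n k) = x}"
    using power_two_power_gcd_eq_self[OF card] \<open>0 < k\<close> by (intro card_mono) auto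
  also have "\<dots> = 2 ^ gcd n k"
    using card_fixed_field[OF char card] \<open>0 < n\<close> by simp
  finally show ?thesis
    by (simp add: power_mono)
qed

lemma nat_power_eq_mult_powerD:
  fixes q c :: nat
  assumes "1 < q" and "q ^ s = c * q ^ e"
  shows "e \<le> s \<and> c = q ^ (s - e)"
proof -
  have "c \<noteq> 0"
  proof
    assume "c = 0"
    then show False
      using assms by simp
  qed
  have "e \<le> s"
  proof (rule ccontr)
    assume "\<not> e \<le> s"
    then have "q ^ s < q ^ e"
      using \<open>1 < q\<close> by (simp add: power_strict_increasing)
    also have "\<dots> \<le> c * q ^ e"
      using \<open>c \<noteq> 0\<close> by simp
    finally show False
      using assms(2) by simp
  qed
  then have "q ^ (s - e) * q ^ e = c * q ^ e"
    using assms(2) by (simp flip: power_add)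
  then show ?thesis
    using \<open>e \<le> s\<close> \<open>1 < q\<close> by simp
qed

lemma form_rank_eq:
  assumes "card (radical B) = q0 ^ m" and "1 < q0"
  shows "form_rank q0 s B = s - m"
  unfolding form_rank_def assms(1) using assms(2) by (simp add: power_inject_exp)

lemma card_radical_B_ab:
  fixes \<alpha> \<beta> :: "'a::{field,finite}"
  assumes char: "CHAR('a) = 2" and card: "card (UNIV :: 'a set) = 2 ^ n"
    and "d dvd n" and "d dvd k" and "0 < d" and "0 < n"
  shows "\<exists>j. 2 * j \<le> n div d \<and> card (radical (B_ab d n k \<alpha> \<beta>)) = (2 ^ d) ^ (n div d - 2 * j)"
proof -
  interpret alternating_form "{c::'a. c ^ (2 ^ d) = c}" "B_ab d n k \<alpha> \<beta>"
    by (rule alternating_form_B_ab[OF char card \<open>d dvd n\<close> \<open>d dvd k\<close>])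
  have "K_subspace UNIV"
    unfolding K_subspace_def by simp
  then obtain j
    where j: "card (UNIV :: 'a set) = card (rad UNIV) * card {c::'a. c ^ (2 ^ d) = c} ^ (2 * j)"
    using card_subspace_eq_card_rad_mult[OF finite_UNIV] by blast
  have "rad UNIV = radical (B_ab d n k \<alpha> \<beta>)"
    unfolding rad_def radical_def by simp
  have "(2 ^ d) ^ (n div d) = card (UNIV :: 'a set)"
    using card \<open>d dvd n\<close> by (simp flip: power_mult)
  also have "\<dots> = card (radical (B_ab d n k \<alpha> \<beta>)) * (2 ^ d) ^ (2 * j)"
    unfolding j \<open>rad UNIV = radical (B_ab d n k \<alpha> \<beta>)\<close>
      card_fixed_field[OF char card \<open>d dvd n\<close> \<open>0 < d\<close> \<open>0 < n\<close>] ..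
  finally have "(2 ^ d) ^ (n div d) = card (radical (B_ab d n k \<alpha> \<beta>)) * (2 ^ d) ^ (2 * j)" .
  with one_less_power[of "2::nat" d] \<open>0 < d\<close>
  have "2 * j \<le> n div d \<and> card (radical (B_ab d n k \<alpha> \<beta>)) = (2 ^ d) ^ (n div d - 2 * j)"
    by (intro nat_power_eq_mult_powerD) simp_all
  then show ?thesis
    by (rule exI)
qed

theorem lemma3:
  fixes \<alpha> \<beta> :: "'a::{field, finite}"
    and n k :: nat
  assumes "n > 0"
    and "card (UNIV :: 'a set) = 2 ^ n"
    and "1 \<le> k" and "k \<le> n - 1"
    and "3 * k \<noteq> n" and "3 * k \<noteq> 2 * n"
    and "odd (n div gcd n k)"
    and "(\<alpha>, \<beta>) \<noteq> (0, 0)"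
  shows "form_rank (2 ^ gcd n k) (n div gcd n k)
           (assoc_bilinear (f_ab (gcd n k) n k \<alpha> \<beta>))
         \<in> {n div gcd n k - 1, n div gcd n k - 3}"
proof -
  define d s where "d = gcd n k" and "s = n div d"
  have char: "CHAR('a) = 2"
    using CHAR_eq_2_if_card_UNIV assms(1,2) by blast
  have "0 < d"
    unfolding d_def using assms(1) by simp
  have "1 < (2::nat) ^ d"
    using one_less_power[of "2::nat" d] \<open>0 < d\<close> by simp
  have "d dvd n" "d dvd k"
    unfolding d_def by simp_all
  obtain j where j: "2 * j \<le> s"
    and R: "card (radical (assoc_bilinear (f_ab d n k \<alpha> \<beta>))) = (2 ^ d) ^ (s - 2 * j)"
    using card_radical_B_ab[OF char assms(2) \<open>d dvd n\<close> \<open>d dvd k\<close> \<open>0 < d\<close> assms(1)]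
    unfolding assoc_bilinear_f_ab[OF char] s_def by blast
  have rank: "form_rank (2 ^ d) s (assoc_bilinear (f_ab d n k \<alpha> \<beta>)) = 2 * j"
    using form_rank_eq[OF R \<open>1 < 2 ^ d\<close>] j by simp
  have "odd s"
    using assms(7) unfolding s_def d_def .
  then have "odd (s - 2 * j)"
    using j by presburger
  have "s - 2 * j \<le> 4"
  proof (cases "5 \<le> s")
    case True
    have "card (radical (B_ab d n k \<alpha> \<beta>)) \<le> (2 ^ d) ^ 4"
      unfolding d_def
      by (rule card_radical_B_ab_le[OF char assms(2,1) _ _ assms(8)])
        (use True assms(3) in \<open>simp_all add: s_def d_def\<close>)
    then have "(2 ^ d) ^ (s - 2 * j) \<le> ((2::nat) ^ d) ^ 4"
      using R unfolding assoc_bilinear_f_ab[OF char] by simp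
    then show ?thesis
      by (rule power_le_imp_le_exp[OF \<open>1 < 2 ^ d\<close>])
  qed simp
  then have "2 * j = s - 1 \<or> 2 * j = s - 3"
    using j \<open>odd (s - 2 * j)\<close> by presburger
  then have "form_rank (2 ^ d) s (assoc_bilinear (f_ab d n k \<alpha> \<beta>)) \<in> {s - 1, s - 3}"
    unfolding rank by auto
  then show ?thesis
    unfolding s_def d_def .
qed

end
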